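(* If $L \subseteq \Sigma^*$ is regular, then $\psi_L$ is a $\leftarrow$-transduction; in particular $\psi_L(\Sigma^* )$ and $\psi_L(L)$ are regular. Furthermore, $\psi_L$ is a $\leftarrow$-reduction from $L$ to $\psi_L(L)$.
   Context: The Myhill–Nerode congruence: $x\sim_L y$ iff for all $z\in\Sigma^*$, $xz\in L\iff yz\in L$ (finitely many classes for regular $L$). $\psi_L(a_1\cdots a_n)=[a_1\cdots a_n]_{\sim_L}[a_2\cdots a_n]_{\sim_L}\cdots[a_n]_{\sim_L}$, a word over the alphabet $\Sigma^*/{\sim_L}$. A Mealy machine $(Q,\Sigma,\Gamma,q_0,\delta)$ with finite $Q$ and $\delta\colon Q\times\Sigma\to Q\times\Gamma$ defines $\tau_q$ by $\tau_q(\varepsilon)=\varepsilon$, $\tau_p(bu)=c\,\tau_q(u)$ if $\delta(p,b)=(q,c)$; a $\leftarrow$-transduction is a map of the form $x\mapsto\tau_{q_0}(x^\mathsf{R})^\mathsf{R}$ ($^\mathsf{R}$ = word reversal). A $\leftarrow$-reduction from $K$ to $K'$ is a $\leftarrow$-transduction $\tau$ with $x\in K\iff\tau(x)\in K'$ for all $x$. *)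

theory Defs
  imports Main
begin

definition regular :: "'a set \<Rightarrow> 'a list set \<Rightarrow> bool" where
  "regular S L \<longleftrightarrow> finite S \<and> L \<subseteq> lists S \<and>
     (\<exists>(Q :: nat set) (q0 :: nat) (\<delta> :: nat \<Rightarrow> 'a \<Rightarrow> nat) (F :: nat set).
        finite Q \<and> q0 \<in> Q \<and> (\<forall>q\<in>Q. \<forall>a\<in>S. \<delta> q a \<in> Q) \<and>
        (\<forall>w\<in>lists S. w \<in> L \<longleftrightarrow> foldl \<delta> q0 w \<in> F))"

definition mn_equiv :: "'a set \<Rightarrow> 'a list set \<Rightarrow> 'a list \<Rightarrow> 'a list \<Rightarrow> bool" where
  "mn_equiv S L x y \<longleftrightarrow> (\<forall>z\<in>lists S. x @ z \<in> L \<longleftrightarrow> y @ z \<in> L)"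

definition mn_class :: "'a set \<Rightarrow> 'a list set \<Rightarrow> 'a list \<Rightarrow> 'a list set" where
  "mn_class S L x = {y \<in> lists S. mn_equiv S L x y}"

definition mn_quotient :: "'a set \<Rightarrow> 'a list set \<Rightarrow> 'a list set set" where
  "mn_quotient S L = mn_class S L ` lists S"

definition psi :: "'a set \<Rightarrow> 'a list set \<Rightarrow> 'a list \<Rightarrow> 'a list set list" where
  "psi S L w = map (\<lambda>i. mn_class S L (drop i w)) [0..<length w]"

fun mealy_run :: "('q \<Rightarrow> 'a \<Rightarrow> 'q \<times> 'c) \<Rightarrow> 'q \<Rightarrow> 'a list \<Rightarrow> 'c list" where
  "mealy_run \<delta> q [] = []"
| "mealy_run \<delta> q (b # u) = (case \<delta> q b of (q', c) \<Rightarrow> c # mealy_run \<delta> q' u)"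

text \<open>\<open>\<tau>\<close> (on \<open>S\<^sup>*\<close>) is a left-transduction with input alphabet \<open>S\<close> and output alphabet
  \<open>G\<close>: realised by a Mealy machine with finite state set (reading reversed input,
  reversing output).\<close>
definition left_transduction :: "'a set \<Rightarrow> 'c set \<Rightarrow> ('a list \<Rightarrow> 'c list) \<Rightarrow> bool" where
  "left_transduction S G \<tau> \<longleftrightarrow> finite S \<and> finite G \<and>
     (\<exists>(Q :: nat set) (q0 :: nat) (\<delta> :: nat \<Rightarrow> 'a \<Rightarrow> nat \<times> 'c).
        finite Q \<and> q0 \<in> Q \<and> (\<forall>q\<in>Q. \<forall>b\<in>S. fst (\<delta> q b) \<in> Q \<and> snd (\<delta> q b) \<in> G) \<and>
        (\<forall>x\<in>lists S. \<tau> x = rev (mealy_run \<delta> q0 (rev x))))"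

definition left_reduction ::
  "'a set \<Rightarrow> 'c set \<Rightarrow> ('a list \<Rightarrow> 'c list) \<Rightarrow> 'a list set \<Rightarrow> 'c list set \<Rightarrow> bool" where
  "left_reduction S G \<tau> K K' \<longleftrightarrow> left_transduction S G \<tau> \<and>
     (\<forall>x\<in>lists S. x \<in> K \<longleftrightarrow> \<tau> x \<in> K')"

end

theory Submission imports Defs "HOL-Library.FuncSet" begin

text \<open>Let a DFA with state set \<open>Q\<close> recognise \<open>L\<close>. The class \<open>[x v]\<close> only depends on the state
  reached on \<open>x\<close> and on the state transformer \<open>Q \<rightarrow> Q\<close> of \<open>v\<close>; the transformer of \<open>b v\<close> is
  obtained from that of \<open>v\<close> and the letter \<open>b\<close>. So a Mealy machine whose states are the
  (finitely many) transformers, reading \<open>x\<close> from right to left, outputs \<open>\<psi>\<^sub>L(x)\<close>.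
  Images of regular languages under such transductions are regular: reading the output from
  left to right, a subset construction guesses the input letters and the machine states
  backwards while running the DFA of the input language forwards. Finally, \<open>x \<in> L\<close> iff
  \<open>[x] \<subseteq> L\<close>, and \<open>[x]\<close> is the first letter of \<open>\<psi>\<^sub>L(x)\<close>.\<close>

lemma foldl_in_states:
  assumes "\<forall>q\<in>Q. \<forall>a\<in>S. \<delta> q a \<in> Q" "q \<in> Q" "w \<in> lists S"
  shows "foldl \<delta> q w \<in> Q"
  using assms(2,3) by (induction w arbitrary: q) (use assms(1) in auto)

lemma regularI:
  fixes Q :: "'q set"
  assumes "finite S" "L \<subseteq> lists S" "finite Q" "q0 \<in> Q" "\<forall>q\<in>Q. \<forall>a\<in>S. \<delta> q a \<in> Q"
    and lang: "\<forall>w\<in>lists S. w \<in> L \<longleftrightarrow> foldl \<delta> q0 w \<in> F"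
  shows "regular S L"
proof -
  obtain f :: "'q \<Rightarrow> nat" and n where f: "f ` Q = {i. i < n}" "inj_on f Q"
    using finite_imp_inj_to_nat_seg[OF assms(3)] by blast
  define \<delta>' where "\<delta>' m a = f (\<delta> (inv_into Q f m) a)" for m a
  have run: "foldl \<delta>' (f q) w = f (foldl \<delta> q w)" if "q \<in> Q" "w \<in> lists S" for q w
    using that
  proof (induction w arbitrary: q)
    case (Cons a w)
    then have "\<delta>' (f q) a = f (\<delta> q a)" "\<delta> q a \<in> Q"
      using f(2) assms(5) by (auto simp: \<delta>'_def)
    with Cons show ?case by simp
  qed simp
  have "\<forall>w\<in>lists S. w \<in> L \<longleftrightarrow> foldl \<delta>' (f q0) w \<in> f ` (F \<inter> Q)"
  proof
    fix w assume w: "w \<in> lists S"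
    have "foldl \<delta> q0 w \<in> Q" using foldl_in_states[OF assms(5,4) w] .
    then show "w \<in> L \<longleftrightarrow> foldl \<delta>' (f q0) w \<in> f ` (F \<inter> Q)"
      using run[OF assms(4) w] lang w f(2) by (auto dest: inj_onD)
  qed
  moreover have "\<forall>q\<in>f ` Q. \<forall>a\<in>S. \<delta>' q a \<in> f ` Q"
    using assms(5) f(2) by (auto simp: \<delta>'_def)
  moreover have "finite (f ` Q)" "f q0 \<in> f ` Q"
    using assms(3,4) by auto
  ultimately show ?thesis
    unfolding regular_def using assms(1,2) by blast
qed

lemma regular_lists: "finite S \<Longrightarrow> regular S (lists S)"
  by (rule regularI[where Q = "UNIV :: unit set" and F = UNIV]) auto

lemma mealy_run_eq_Nil_iff [simp]: "mealy_run \<delta> q w = [] \<longleftrightarrow> w = []"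
  by (cases w) (auto split: prod.split)

lemma mealy_run_Cons:
  "mealy_run \<delta> q (a # w) = snd (\<delta> q a) # mealy_run \<delta> (fst (\<delta> q a)) w"
  by (simp split: prod.split)

lemma mealy_run_in_lists:
  assumes "\<forall>q\<in>Q. \<forall>b\<in>S. fst (\<delta> q b) \<in> Q \<and> snd (\<delta> q b) \<in> G" "q \<in> Q" "w \<in> lists S"
  shows "mealy_run \<delta> q w \<in> lists G"
  using assms(2,3)
proof (induction w arbitrary: q)
  case (Cons a w)
  then have "fst (\<delta> q a) \<in> Q" "snd (\<delta> q a) \<in> G"
    using assms(1) by auto
  with Cons show ?case by (simp add: mealy_run_Cons del: mealy_run.simps(2))
qed simp

lemma left_transductionI:
  fixes Q :: "'q set"
  assumes "finite S" "finite G" "finite Q" "q0 \<in> Q"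
    and closed: "\<forall>q\<in>Q. \<forall>b\<in>S. fst (\<delta> q b) \<in> Q \<and> snd (\<delta> q b) \<in> G"
    and \<tau>: "\<forall>x\<in>lists S. \<tau> x = rev (mealy_run \<delta> q0 (rev x))"
  shows "left_transduction S G \<tau>"
proof -
  obtain f :: "'q \<Rightarrow> nat" and n where f: "f ` Q = {i. i < n}" "inj_on f Q"
    using finite_imp_inj_to_nat_seg[OF assms(3)] by blast
  define \<delta>' where "\<delta>' m b = (f (fst (\<delta> (inv_into Q f m) b)), snd (\<delta> (inv_into Q f m) b))" for m b
  have run: "mealy_run \<delta>' (f q) w = mealy_run \<delta> q w" if "q \<in> Q" "w \<in> lists S" for q w
    using that
  proof (induction w arbitrary: q)
    case (Cons a w)
    then have "\<delta>' (f q) a = (f (fst (\<delta> q a)), snd (\<delta> q a))" "fst (\<delta> q a) \<in> Q"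
      using f(2) closed by (auto simp: \<delta>'_def)
    with Cons show ?case by (simp split: prod.split)
  qed simp
  have "\<forall>q\<in>f ` Q. \<forall>b\<in>S. fst (\<delta>' q b) \<in> f ` Q \<and> snd (\<delta>' q b) \<in> G"
    using closed f(2) by (auto simp: \<delta>'_def)
  moreover have "\<forall>x\<in>lists S. \<tau> x = rev (mealy_run \<delta>' (f q0) (rev x))"
    using \<tau> run[OF assms(4)] by (simp add: in_lists_conv_set)
  moreover have "finite (f ` Q)" "f q0 \<in> f ` Q"
    using assms(3,4) by auto
  ultimately show ?thesis
    unfolding left_transduction_def using assms(1,2) by blast
qed

text \<open>The subset construction behind \<open>regular_left_transduction_image\<close>: reading the output
  \<open>u\<close> from left to right retraces the run of the Mealy machine \<open>\<delta>\<close> on the reversed input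
  backwards, so \<open>q\<close> in a pair \<open>(q, p)\<close> is a guessed machine state, while \<open>p\<close> is the state of
  the DFA \<open>\<eta>\<close> on the input guessed so far.\<close>
definition run_pairs ::
  "'q set \<Rightarrow> 'a set \<Rightarrow> ('q \<Rightarrow> 'a \<Rightarrow> 'q \<times> 'c) \<Rightarrow> ('p \<Rightarrow> 'a \<Rightarrow> 'p) \<Rightarrow> 'p \<Rightarrow> 'c list
    \<Rightarrow> ('q \<times> 'p) set" where
  "run_pairs Q S \<delta> \<eta> p0 u =
    {(q, foldl \<eta> p0 x) | q x. q \<in> Q \<and> x \<in> lists S \<and> rev (mealy_run \<delta> q (rev x)) = u}"

definition run_pairs_step ::
  "'q set \<Rightarrow> 'a set \<Rightarrow> ('q \<Rightarrow> 'a \<Rightarrow> 'q \<times> 'c) \<Rightarrow> ('p \<Rightarrow> 'a \<Rightarrow> 'p) \<Rightarrow> ('q \<times> 'p) set \<Rightarrow> 'c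
    \<Rightarrow> ('q \<times> 'p) set" where
  "run_pairs_step Q S \<delta> \<eta> X c =
    {(q', \<eta> p a) | q' p a. \<exists>q. (q, p) \<in> X \<and> a \<in> S \<and> q' \<in> Q \<and> \<delta> q' a = (q, c)}"

lemma run_pairs_snoc:
  assumes closed: "\<forall>q\<in>Q. \<forall>b\<in>S. fst (\<delta> q b) \<in> Q"
  shows "run_pairs Q S \<delta> \<eta> p0 (u @ [c]) = run_pairs_step Q S \<delta> \<eta> (run_pairs Q S \<delta> \<eta> p0 u) c"
proof
  show "run_pairs Q S \<delta> \<eta> p0 (u @ [c]) \<subseteq> run_pairs_step Q S \<delta> \<eta> (run_pairs Q S \<delta> \<eta> p0 u) c"
  proof
    fix r assume "r \<in> run_pairs Q S \<delta> \<eta> p0 (u @ [c])"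
    then obtain q' x' where r: "r = (q', foldl \<eta> p0 x')" "q' \<in> Q" "x' \<in> lists S"
      and out: "rev (mealy_run \<delta> q' (rev x')) = u @ [c]"
      unfolding run_pairs_def by blast
    then obtain x a where x': "x' = x @ [a]"
      by (cases x' rule: rev_cases) auto
    with r(3) have "a \<in> S" "x \<in> lists S" by auto
    with closed r(2) have q: "fst (\<delta> q' a) \<in> Q" by blast
    from out x' have "rev (mealy_run \<delta> (fst (\<delta> q' a)) (rev x)) @ [snd (\<delta> q' a)] = u @ [c]"
      by (simp add: mealy_run_Cons del: mealy_run.simps(2))
    then have "rev (mealy_run \<delta> (fst (\<delta> q' a)) (rev x)) = u" and c: "snd (\<delta> q' a) = c"
      by simp_all
    with q \<open>x \<in> lists S\<close> have "(fst (\<delta> q' a), foldl \<eta> p0 x) \<in> run_pairs Q S \<delta> \<eta> p0 u"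
      unfolding run_pairs_def by blast
    moreover have "\<delta> q' a = (fst (\<delta> q' a), c)" using c by (metis prod.collapse)
    ultimately show "r \<in> run_pairs_step Q S \<delta> \<eta> (run_pairs Q S \<delta> \<eta> p0 u) c"
      unfolding run_pairs_step_def using r(1,2) x' \<open>a \<in> S\<close> by fastforce
  qed
  show "run_pairs_step Q S \<delta> \<eta> (run_pairs Q S \<delta> \<eta> p0 u) c \<subseteq> run_pairs Q S \<delta> \<eta> p0 (u @ [c])"
  proof
    fix r assume "r \<in> run_pairs_step Q S \<delta> \<eta> (run_pairs Q S \<delta> \<eta> p0 u) c"
    then obtain q' q x a where r: "r = (q', \<eta> (foldl \<eta> p0 x) a)" "a \<in> S" "q' \<in> Q"
      "\<delta> q' a = (q, c)" "x \<in> lists S" "rev (mealy_run \<delta> q (rev x)) = u"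
      unfolding run_pairs_step_def run_pairs_def by blast
    then have "rev (mealy_run \<delta> q' (rev (x @ [a]))) = u @ [c]"
      by (simp add: mealy_run_Cons)
    with r show "r \<in> run_pairs Q S \<delta> \<eta> p0 (u @ [c])"
      unfolding run_pairs_def by (intro CollectI exI[of _ q'] exI[of _ "x @ [a]"]) auto
  qed
qed

lemma foldl_run_pairs_step:
  assumes "\<forall>q\<in>Q. \<forall>b\<in>S. fst (\<delta> q b) \<in> Q"
  shows "foldl (run_pairs_step Q S \<delta> \<eta>) (Q \<times> {p0}) u = run_pairs Q S \<delta> \<eta> p0 u"
proof (induction u rule: rev_induct)
  case Nil
  show ?case unfolding run_pairs_def by auto
next
  case (snoc c u)
  then show ?case by (simp add: run_pairs_snoc[OF assms])
qed

lemma regular_left_transduction_image: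
  fixes \<tau> :: "'a list \<Rightarrow> 'c list"
  assumes "left_transduction S G \<tau>" "regular S K"
  shows "regular G (\<tau> ` K)"
proof -
  obtain Q q0 and \<delta> :: "nat \<Rightarrow> 'a \<Rightarrow> nat \<times> 'c" where "finite S" "finite G" "finite Q" "q0 \<in> Q"
    and closed: "\<forall>q\<in>Q. \<forall>b\<in>S. fst (\<delta> q b) \<in> Q \<and> snd (\<delta> q b) \<in> G"
    and \<tau>: "\<forall>x\<in>lists S. \<tau> x = rev (mealy_run \<delta> q0 (rev x))"
    using assms(1) unfolding left_transduction_def by blast
  obtain P :: "nat set" and p0 \<eta> F where "K \<subseteq> lists S" "finite P" "p0 \<in> P"
    and \<eta>: "\<forall>p\<in>P. \<forall>a\<in>S. \<eta> p a \<in> P" and K: "\<forall>x\<in>lists S. x \<in> K \<longleftrightarrow> foldl \<eta> p0 x \<in> F"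
    using assms(2) unfolding regular_def by blast
  let ?D = "run_pairs_step Q S \<delta> \<eta>"
  have "\<tau> x \<in> lists G" if "x \<in> lists S" for x
    using that \<tau> mealy_run_in_lists[OF closed \<open>q0 \<in> Q\<close>, of "rev x"]
    by (simp add: in_lists_conv_set)
  then have "\<tau> ` K \<subseteq> lists G" using \<open>K \<subseteq> lists S\<close> by blast
  moreover have "u \<in> \<tau> ` K \<longleftrightarrow> foldl ?D (Q \<times> {p0}) u \<in> {X. \<exists>p\<in>F. (q0, p) \<in> X}" for u
  proof -
    have "u \<in> \<tau> ` K \<longleftrightarrow> (\<exists>x\<in>lists S. foldl \<eta> p0 x \<in> F \<and> rev (mealy_run \<delta> q0 (rev x)) = u)"
      using \<open>K \<subseteq> lists S\<close> K \<tau> by (metis (no_types, lifting) image_iff subsetD)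
    also have "\<dots> \<longleftrightarrow> (\<exists>p\<in>F. (q0, p) \<in> run_pairs Q S \<delta> \<eta> p0 u)"
      unfolding run_pairs_def using \<open>q0 \<in> Q\<close> by blast
    finally show ?thesis
      using closed by (simp add: foldl_run_pairs_step)
  qed
  moreover have "\<forall>X\<in>Pow (Q \<times> P). \<forall>c\<in>G. ?D X c \<in> Pow (Q \<times> P)"
    using \<eta> unfolding run_pairs_step_def by blast
  ultimately show ?thesis
    using \<open>finite G\<close> \<open>finite Q\<close> \<open>finite P\<close> \<open>p0 \<in> P\<close>
    by (intro regularI[of G _ "Pow (Q \<times> P)" "Q \<times> {p0}" ?D "{X. \<exists>p\<in>F. (q0, p) \<in> X}"])
      blast+
qed

lemma left_reduction_image:
  assumes "left_transduction S G \<tau>" "K \<subseteq> lists S"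
    and "\<And>x y. x \<in> lists S \<Longrightarrow> y \<in> lists S \<Longrightarrow> \<tau> x = \<tau> y \<Longrightarrow> x \<in> K \<Longrightarrow> y \<in> K"
  shows "left_reduction S G \<tau> K (\<tau> ` K)"
proof -
  have "x \<in> K" if "x \<in> lists S" "\<tau> x \<in> \<tau> ` K" for x
  proof -
    from that(2) obtain y where "y \<in> K" "\<tau> y = \<tau> x" by auto
    with that(1) assms(2) assms(3)[of y x] show ?thesis by blast
  qed
  then show ?thesis
    unfolding left_reduction_def using assms(1) by blast
qed

fun suffix_classes :: "('a list \<Rightarrow> 'c) \<Rightarrow> 'a list \<Rightarrow> 'a list \<Rightarrow> 'c list" where
  "suffix_classes C [] v = []"
| "suffix_classes C (a # w) v = C (a # w @ v) # suffix_classes C w v"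

lemma suffix_classes_snoc:
  "suffix_classes C (w @ [a]) v = suffix_classes C w (a # v) @ [C (a # v)]"
  by (induction w) auto

lemma psi_Cons: "psi S L (a # w) = mn_class S L (a # w) # psi S L w"
proof -
  have "[0..<Suc (length w)] = 0 # map Suc [0..<length w]"
    by (simp add: upt_conv_Cons map_Suc_upt del: upt_Suc)
  then show ?thesis by (simp add: psi_def del: upt_Suc)
qed

lemma psi_eq_suffix_classes: "psi S L w = suffix_classes (mn_class S L) w []"
  by (induction w) (simp add: psi_def, simp add: psi_Cons)

lemma mn_class_subset_iff: "x \<in> lists S \<Longrightarrow> mn_class S L x \<subseteq> L \<longleftrightarrow> x \<in> L"
  unfolding mn_class_def mn_equiv_def by (auto dest: bspec[of _ _ "[]"])

lemma psi_eq_imp_mem: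
  assumes "x \<in> lists S" "y \<in> lists S" "psi S L x = psi S L y" "x \<in> L"
  shows "y \<in> L"
proof (cases x)
  case Nil
  with assms show ?thesis by (simp add: psi_def)
next
  case (Cons a x')
  with assms(3) obtain b y' where "y = b # y'"
    by (cases y) (auto simp: psi_def)
  with Cons assms show ?thesis
    using mn_class_subset_iff[of x S L] mn_class_subset_iff[of y S L] by (simp add: psi_Cons)
qed

locale dfa_recognising =
  fixes S :: "'a set" and L :: "'a list set"
    and Q :: "'q set" and q0 :: 'q and \<delta> :: "'q \<Rightarrow> 'a \<Rightarrow> 'q" and F :: "'q set"
  assumes finite_alphabet: "finite S" and finite_states: "finite Q" and initial: "q0 \<in> Q"
    and closed: "\<forall>q\<in>Q. \<forall>a\<in>S. \<delta> q a \<in> Q"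
    and accepts: "\<forall>w\<in>lists S. w \<in> L \<longleftrightarrow> foldl \<delta> q0 w \<in> F"
begin

definition state_class :: "'q \<Rightarrow> 'a list set" where
  "state_class q =
    {y \<in> lists S. \<forall>z\<in>lists S. foldl \<delta> q z \<in> F \<longleftrightarrow> foldl \<delta> (foldl \<delta> q0 y) z \<in> F}"

definition transformer :: "'a list \<Rightarrow> 'q \<Rightarrow> 'q" where
  "transformer v = (\<lambda>q\<in>Q. foldl \<delta> q v)"

lemma append_mem_iff:
  "x \<in> lists S \<Longrightarrow> z \<in> lists S \<Longrightarrow> x @ z \<in> L \<longleftrightarrow> foldl \<delta> (foldl \<delta> q0 x) z \<in> F"
  using accepts by simp

lemma mn_class_eq_state_class:
  assumes "x \<in> lists S"
  shows "mn_class S L x = state_class (foldl \<delta> q0 x)"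
proof -
  have "mn_equiv S L x y \<longleftrightarrow>
      (\<forall>z\<in>lists S. foldl \<delta> (foldl \<delta> q0 x) z \<in> F \<longleftrightarrow> foldl \<delta> (foldl \<delta> q0 y) z \<in> F)"
    if "y \<in> lists S" for y
    unfolding mn_equiv_def using append_mem_iff[OF assms] append_mem_iff[OF that] by simp
  then show ?thesis by (auto simp: mn_class_def state_class_def)
qed

lemma mn_class_append:
  "x \<in> lists S \<Longrightarrow> v \<in> lists S \<Longrightarrow>
    mn_class S L (x @ v) = state_class (transformer v (foldl \<delta> q0 x))"
  using mn_class_eq_state_class[of "x @ v"] foldl_in_states[OF closed initial, of x]
  by (simp add: transformer_def)

lemma finite_mn_quotient: "finite (mn_quotient S L)"
proof -
  have "mn_quotient S L \<subseteq> state_class ` Q"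
    using mn_class_eq_state_class foldl_in_states[OF closed initial]
    by (auto simp: mn_quotient_def)
  then show ?thesis using finite_states finite_subset by blast
qed

text \<open>The states of this Mealy machine are the transformers of the suffixes read so far.\<close>
definition psi_mealy :: "('q \<Rightarrow> 'q) \<Rightarrow> 'a \<Rightarrow> ('q \<Rightarrow> 'q) \<times> 'a list set" where
  "psi_mealy h b = ((\<lambda>q\<in>Q. h (\<delta> q b)), state_class (h (\<delta> q0 b)))"

lemma psi_mealy_transformer:
  assumes "b \<in> S" "v \<in> lists S"
  shows "psi_mealy (transformer v) b = (transformer (b # v), mn_class S L (b # v))"
proof -
  have "(\<lambda>q\<in>Q. transformer v (\<delta> q b)) = transformer (b # v)"
    unfolding transformer_def by (rule restrict_ext) (use closed assms(1) in simp)
  moreover have "state_class (transformer v (\<delta> q0 b)) = mn_class S L (b # v)"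
    using mn_class_append[of "[b]" v] assms by simp
  ultimately show ?thesis by (simp add: psi_mealy_def)
qed

lemma rev_mealy_run_psi_mealy:
  "x \<in> lists S \<Longrightarrow> v \<in> lists S \<Longrightarrow>
    rev (mealy_run psi_mealy (transformer v) (rev x)) = suffix_classes (mn_class S L) x v"
proof (induction x arbitrary: v rule: rev_induct)
  case (snoc a x)
  then show ?case by (simp add: psi_mealy_transformer suffix_classes_snoc)
qed simp

lemma left_transduction_psi: "left_transduction S (mn_quotient S L) (psi S L)"
proof (rule left_transductionI[of S _ "transformer ` lists S" "transformer []"])
  show "finite (transformer ` lists S)"
  proof (rule finite_subset)
    show "transformer ` lists S \<subseteq> Q \<rightarrow>\<^sub>E Q"
      by (rule image_subsetI) (simp add: transformer_def foldl_in_states[OF closed])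
    show "finite (Q \<rightarrow>\<^sub>E Q)"
      using finite_states by (intro finite_PiE) auto
  qed
  show "\<forall>h\<in>transformer ` lists S. \<forall>b\<in>S.
          fst (psi_mealy h b) \<in> transformer ` lists S \<and> snd (psi_mealy h b) \<in> mn_quotient S L"
    by (auto simp: psi_mealy_transformer mn_quotient_def)
  show "\<forall>x\<in>lists S. psi S L x = rev (mealy_run psi_mealy (transformer []) (rev x))"
    by (simp add: rev_mealy_run_psi_mealy psi_eq_suffix_classes)
qed (use finite_alphabet finite_mn_quotient in auto)

end

theorem lemma4p2:
  fixes S :: "'a set" and L :: "'a list set"
  assumes "regular S L"
  shows "left_transduction S (mn_quotient S L) (psi S L)
       \<and> regular (mn_quotient S L) (psi S L ` lists S)
       \<and> regular (mn_quotient S L) (psi S L ` L)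
       \<and> left_reduction S (mn_quotient S L) (psi S L) L (psi S L ` L)"
proof -
  obtain Q q0 \<delta> F where "dfa_recognising S L (Q :: nat set) q0 \<delta> F"
    using assms unfolding regular_def dfa_recognising_def by blast
  then have \<psi>: "left_transduction S (mn_quotient S L) (psi S L)"
    by (rule dfa_recognising.left_transduction_psi)
  have "finite S" "L \<subseteq> lists S"
    using assms by (auto simp: regular_def)
  have "regular (mn_quotient S L) (psi S L ` lists S)"
    using regular_left_transduction_image[OF \<psi> regular_lists[OF \<open>finite S\<close>]] .
  moreover have "regular (mn_quotient S L) (psi S L ` L)"
    using regular_left_transduction_image[OF \<psi> assms] .
  moreover have "left_reduction S (mn_quotient S L) (psi S L) L (psi S L ` L)"
    using left_reduction_image[OF \<psi> \<open>L \<subseteq> lists S\<close> psi_eq_imp_mem] .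
  ultimately show ?thesis
    using \<psi> by blast
qed

end
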